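(* Let $A$ be a pure hyperbolic isometry and $B$ a pure parabolic isometry of $\mathbb{H}^4$ such that $\mathrm{fix}(A)\cap\mathrm{fix}(B)=\emptyset$. Then $A$ and $B$ are linked.
   Context: A pure hyperbolic isometry is a composition of reflections in two ultra-parallel hyperplanes. A pure parabolic isometry is a composition of reflections in two hyperplanes tangent at a unique point at infinity. $\mathrm{fix}(\cdot)$ denotes the set of fixed points in $\mathbb{H}^4\cup\partial\mathbb{H}^4$. Two isometries $A,B$ are linked if there are involutions $\alpha,\beta,\gamma$ of $\mathbb{H}^4$ with $A=\alpha\beta$ and $B=\beta\gamma$. *)

theory Defs
  imports "HOL-Analysis.Analysis"
begin

text \<open>Hyperboloid model of hyperbolic 4-space inside Minkowski space R^(4,1),
  realised as real^5 with coordinate 0 timelike.\<close>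

definition lf :: "real^5 \<Rightarrow> real^5 \<Rightarrow> real" where
  "lf x y = (\<Sum>i\<in>UNIV - {0}. x$i * y$i) - x$0 * y$0"

definition H4 :: "(real^5) set" where
  "H4 = {x. lf x x = -1 \<and> x$0 > 0}"

text \<open>Future null vectors; a point at infinity is the ray spanned by such a vector.\<close>
definition null_fut :: "real^5 \<Rightarrow> bool" where
  "null_fut v \<longleftrightarrow> lf v v = 0 \<and> v$0 > 0"

definition same_ray :: "real^5 \<Rightarrow> real^5 \<Rightarrow> bool" where
  "same_ray v w \<longleftrightarrow> (\<exists>c>0. w = c *\<^sub>R v)"

text \<open>Isometries of H^4 (all, including orientation reversing) = the group O^+(4,1)
  of linear maps preserving the Lorentz form and the upper sheet.\<close>
definition isom :: "(real^5 \<Rightarrow> real^5) \<Rightarrow> bool" where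
  "isom f \<longleftrightarrow> linear f \<and> (\<forall>x y. lf (f x) (f y) = lf x y) \<and> f ` H4 \<subseteq> H4"

definition involution :: "(real^5 \<Rightarrow> real^5) \<Rightarrow> bool" where
  "involution f \<longleftrightarrow> isom f \<and> f \<circ> f = id \<and> f \<noteq> id"

definition spacelike_unit :: "real^5 \<Rightarrow> bool" where
  "spacelike_unit e \<longleftrightarrow> lf e e = 1"

definition hplane :: "real^5 \<Rightarrow> (real^5) set" where
  "hplane e = {x \<in> H4. lf x e = 0}"

definition hplane_bd :: "real^5 \<Rightarrow> real^5 \<Rightarrow> bool" where
  "hplane_bd e v \<longleftrightarrow> null_fut v \<and> lf v e = 0"

definition refl :: "real^5 \<Rightarrow> real^5 \<Rightarrow> real^5" where
  "refl e x = x - (2 * lf x e) *\<^sub>R e"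

text \<open>Ultra-parallel: closures in H^4 \<union> boundary are disjoint.\<close>
definition ultra_parallel :: "real^5 \<Rightarrow> real^5 \<Rightarrow> bool" where
  "ultra_parallel e1 e2 \<longleftrightarrow> hplane e1 \<inter> hplane e2 = {} \<and>
     \<not> (\<exists>v. hplane_bd e1 v \<and> hplane_bd e2 v)"

definition tangent_at_infinity :: "real^5 \<Rightarrow> real^5 \<Rightarrow> bool" where
  "tangent_at_infinity e1 e2 \<longleftrightarrow> hplane e1 \<inter> hplane e2 = {} \<and>
     (\<exists>v. hplane_bd e1 v \<and> hplane_bd e2 v \<and>
          (\<forall>w. hplane_bd e1 w \<and> hplane_bd e2 w \<longrightarrow> same_ray v w))"

definition pure_hyperbolic :: "(real^5 \<Rightarrow> real^5) \<Rightarrow> bool" where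
  "pure_hyperbolic A \<longleftrightarrow> (\<exists>e1 e2. spacelike_unit e1 \<and> spacelike_unit e2 \<and>
     ultra_parallel e1 e2 \<and> A = refl e1 \<circ> refl e2)"

definition pure_parabolic :: "(real^5 \<Rightarrow> real^5) \<Rightarrow> bool" where
  "pure_parabolic A \<longleftrightarrow> (\<exists>e1 e2. spacelike_unit e1 \<and> spacelike_unit e2 \<and>
     tangent_at_infinity e1 e2 \<and> A = refl e1 \<circ> refl e2)"

text \<open>fix(f) in H^4 \<union> boundary: interior fixed points, and fixed points at infinity
  (future null rays mapped to themselves).\<close>
definition fix_int :: "(real^5 \<Rightarrow> real^5) \<Rightarrow> (real^5) set" where
  "fix_int f = {x \<in> H4. f x = x}"

definition fixes_bd :: "(real^5 \<Rightarrow> real^5) \<Rightarrow> real^5 \<Rightarrow> bool" where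
  "fixes_bd f v \<longleftrightarrow> null_fut v \<and> same_ray v (f v)"

definition fix_disjoint :: "(real^5 \<Rightarrow> real^5) \<Rightarrow> (real^5 \<Rightarrow> real^5) \<Rightarrow> bool" where
  "fix_disjoint A B \<longleftrightarrow> fix_int A \<inter> fix_int B = {} \<and>
     \<not> (\<exists>v. fixes_bd A v \<and> fixes_bd B v)"

definition linked :: "(real^5 \<Rightarrow> real^5) \<Rightarrow> (real^5 \<Rightarrow> real^5) \<Rightarrow> bool" where
  "linked A B \<longleftrightarrow> (\<exists>\<alpha> \<beta> \<gamma>. involution \<alpha> \<and> involution \<beta> \<and> involution \<gamma> \<and>
     A = \<alpha> \<circ> \<beta> \<and> B = \<beta> \<circ> \<gamma>)"

end

theory Submission
  imports Defs
begin

text \<open>Write \<open>A = r\<^sub>1 r\<^sub>2\<close> and \<open>B = r\<^sub>3 r\<^sub>4\<close> as products of reflections with unit normals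
  \<open>e\<^sub>i\<close>, and let \<open>u\<close> be a null vector spanning the point at infinity where the mirrors of \<open>B\<close>
  touch. Then \<open>B\<close> fixes \<open>u\<close>, so \<open>A\<close> does not fix its ray. In the pencil spanned by \<open>e\<^sub>1, e\<^sub>2\<close>
  the vector \<open>s = \<langle>e\<^sub>2,u\<rangle> e\<^sub>1 - \<langle>e\<^sub>1,u\<rangle> e\<^sub>2\<close> is orthogonal to \<open>u\<close>, and it is not isotropic
  precisely because \<open>A\<close> moves the ray of \<open>u\<close>; let \<open>t\<close> be orthogonal to \<open>s\<close> in the pencil,
  so that \<open>\<langle>u,t\<rangle> = -\<langle>s,s\<rangle> \<noteq> 0\<close>. The involution \<open>\<beta>\<close> that fixes the plane spanned by \<open>u\<close> and
  \<open>t\<close> pointwise and negates its orthogonal complement acts on the pencil as the reflection in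
  \<open>s\<^sup>\<perp>\<close>, and on the normals of \<open>B\<close>, which are \<open>e\<^sub>3\<close> and \<open>\<plusminus>e\<^sub>3 + c u\<close>, by adding multiples of
  \<open>u\<close> and changing sign. In both cases \<open>\<beta>\<close> conjugates the product of reflections to its
  inverse, so \<open>A \<beta>\<close> and \<open>\<beta> B\<close> are involutions and \<open>A = (A \<beta>) \<beta>\<close>, \<open>B = \<beta> (\<beta> B)\<close>.\<close>

lemma lf_commute: "lf x y = lf y x"
  unfolding lf_def by (simp add: mult.commute)

lemma lf_add_left [simp]: "lf (x + y) z = lf x z + lf y z"
  unfolding lf_def by (simp add: algebra_simps sum.distrib)

lemma lf_add_right [simp]: "lf z (x + y) = lf z x + lf z y"
  unfolding lf_def by (simp add: algebra_simps sum.distrib)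

lemma lf_diff_left [simp]: "lf (x - y) z = lf x z - lf y z"
  unfolding lf_def by (simp add: algebra_simps sum_subtractf)

lemma lf_diff_right [simp]: "lf z (x - y) = lf z x - lf z y"
  unfolding lf_def by (simp add: algebra_simps sum_subtractf)

lemma lf_scaleR_left [simp]: "lf (c *\<^sub>R x) z = c * lf x z"
  unfolding lf_def by (simp add: algebra_simps sum_distrib_left)

lemma lf_scaleR_right [simp]: "lf z (c *\<^sub>R x) = c * lf z x"
  unfolding lf_def by (simp add: algebra_simps sum_distrib_left)

lemma lf_minus_left [simp]: "lf (- x) z = - lf x z"
  unfolding lf_def by (simp add: sum_negf)

lemma lf_minus_right [simp]: "lf z (- x) = - lf z x"
  unfolding lf_def by (simp add: sum_negf)

lemma lf_zero_left [simp]: "lf 0 z = 0" and lf_zero_right [simp]: "lf z 0 = 0"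
  unfolding lf_def by simp_all

lemma lf_axis: "lf z (axis i 1) = (if i = 0 then - z$0 else z$i)"
proof (cases "i = 0")
  case False
  have "(\<Sum>j\<in>UNIV - {0}. z$j * axis i 1 $ j) = (\<Sum>j\<in>UNIV - {0}. if j = i then z$i else 0)"
    by (rule sum.cong) (auto simp: axis_def)
  with False show ?thesis
    unfolding lf_def by (simp add: sum.delta axis_def)
qed (simp add: lf_def axis_def)

lemma lf_eqI: assumes "\<And>y. lf a y = lf b y" shows "a = b"
proof -
  have "a$i = b$i" for i
    using assms[of "axis i 1"] by (simp add: lf_axis split: if_splits)
  then show ?thesis by (simp add: vec_eq_iff)
qed

definition spatial :: "real^5 \<Rightarrow> real^5" where
  "spatial x = (\<chi> i. if i = 0 then 0 else x$i)"

lemma lf_eq_spatial: "lf x y = inner (spatial x) (spatial y) - x$0 * y$0"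
proof -
  have "inner (spatial x) (spatial y) = (\<Sum>i\<in>UNIV. if i = 0 then 0 else x$i * y$i)"
    unfolding inner_vec_def spatial_def by (rule sum.cong) auto
  also have "\<dots> = (\<Sum>i\<in>UNIV - {0}. x$i * y$i)"
    by (subst sum.remove[of UNIV 0]) (auto intro!: sum.cong)
  finally show ?thesis unfolding lf_def by simp
qed

lemma norm_spatial_sq: "(norm (spatial x))\<^sup>2 = lf x x + (x$0)\<^sup>2"
  unfolding lf_eq_spatial power2_norm_eq_inner by (simp add: power2_eq_square)

lemma abs_lf_add_time_le: "\<bar>lf x y + x$0 * y$0\<bar> \<le> norm (spatial x) * norm (spatial y)"
  using Cauchy_Schwarz_ineq2[of "spatial x" "spatial y"] by (simp add: lf_eq_spatial)

lemma norm_spatial_less_if_timelike: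
  assumes "lf y y < 0" shows "norm (spatial y) < \<bar>y$0\<bar>"
  using assms norm_spatial_sq[of y] power2_less_imp_less[of "norm (spatial y)" "\<bar>y$0\<bar>"] by simp

lemma norm_spatial_null_fut:
  assumes "null_fut v" shows "norm (spatial v) = v$0"
proof -
  have "(norm (spatial v))\<^sup>2 = (v$0)\<^sup>2"
    using assms norm_spatial_sq[of v] unfolding null_fut_def by simp
  with assms show ?thesis unfolding null_fut_def
    by (metis norm_ge_zero order_less_imp_le power2_eq_iff_nonneg)
qed

lemma lf_timelike_null_fut:
  assumes y: "lf y y < 0" and v: "null_fut v"
  shows "lf y v < 0 \<longleftrightarrow> 0 < y$0" and "lf y v \<noteq> 0"
proof -
  have v0: "0 < v$0" using v unfolding null_fut_def by simp
  have y0: "y$0 \<noteq> 0" using norm_spatial_less_if_timelike[OF y] norm_ge_zero[of "spatial y"] by linarith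
  have "\<bar>lf y v + y$0 * v$0\<bar> < \<bar>y$0\<bar> * v$0"
    using abs_lf_add_time_le[of y v] norm_spatial_less_if_timelike[OF y] v0
      norm_spatial_null_fut[OF v] by (smt (verit) mult_strict_right_mono)
  then have "0 < y$0 \<Longrightarrow> lf y v < 0" and "y$0 < 0 \<Longrightarrow> 0 < lf y v"
    by (simp_all add: abs_less_iff)
  with y0 show "lf y v < 0 \<longleftrightarrow> 0 < y$0" and "lf y v \<noteq> 0"
    by (metis less_asym linorder_neqE_linordered_idom)+
qed

lemma lf_H4_null_fut_neg: "x \<in> H4 \<Longrightarrow> null_fut v \<Longrightarrow> lf x v < 0"
  using lf_timelike_null_fut(1)[of x v] unfolding H4_def by simp

lemma in_H4_if_lf_neg:
  assumes x: "x \<in> H4" and y: "lf y y = -1" and xy: "lf x y < 0"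
  shows "y \<in> H4"
proof (rule ccontr)
  assume "y \<notin> H4"
  with y have y0: "y$0 \<le> 0" unfolding H4_def by auto
  have "norm (spatial x) < x$0" "norm (spatial y) < - y$0"
    using norm_spatial_less_if_timelike[of x] norm_spatial_less_if_timelike[of y] x y y0
    unfolding H4_def by auto
  then have "norm (spatial x) * norm (spatial y) < x$0 * (- y$0)"
    using mult_strict_mono' norm_ge_zero by blast
  with abs_lf_add_time_le[of x y] xy show False by (smt (verit) mult_minus_right)
qed

lemma collinear_if_null_orthogonal_null_fut:
  assumes m: "lf m m = 0" and v: "null_fut v" and mv: "lf m v = 0"
  shows "\<exists>c. m = c *\<^sub>R v"
proof -
  have v': "lf v v = 0" "v$0 > 0" using v unfolding null_fut_def by auto
  define d where "d = m - (m$0 / v$0) *\<^sub>R v"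
  have d0: "d$0 = 0" using v' by (simp add: d_def)
  have "lf d d = 0" using m mv v' by (simp add: d_def lf_commute[of v m])
  then have "spatial d = 0" using norm_spatial_sq[of d] d0 by simp
  with d0 have "d = 0" unfolding spatial_def by (simp add: vec_eq_iff) metis
  then show ?thesis unfolding d_def by auto
qed

lemma linear_refl: "linear (refl e)"
  by (rule linearI) (simp_all add: refl_def algebra_simps)

lemma lf_refl_refl: "lf e e = 1 \<Longrightarrow> lf (refl e x) (refl e y) = lf x y"
  by (simp add: refl_def algebra_simps lf_commute[of e y])

lemma refl_refl: "lf e e = 1 \<Longrightarrow> refl e (refl e x) = x"
  by (rule lf_eqI) (simp add: refl_def algebra_simps)

lemma refl_fixes_orthogonal: "lf x e = 0 \<Longrightarrow> refl e x = x"
  by (simp add: refl_def)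

lemma refl_in_H4:
  assumes e: "lf e e = 1" and x: "x \<in> H4" shows "refl e x \<in> H4"
proof (rule in_H4_if_lf_neg[OF x])
  show "lf (refl e x) (refl e x) = -1"
    using lf_refl_refl[OF e] x unfolding H4_def by simp
  have "lf x (refl e x) = -1 - 2 * (lf x e)\<^sup>2"
    using x unfolding H4_def by (simp add: refl_def power2_eq_square lf_commute[of e x])
  then show "lf x (refl e x) < 0"
    by (smt (verit) zero_le_power2)
qed

lemma isom_refl: "lf e e = 1 \<Longrightarrow> isom (refl e)"
  unfolding isom_def using linear_refl lf_refl_refl refl_in_H4 by blast

lemma isom_comp: "isom f \<Longrightarrow> isom g \<Longrightarrow> isom (f \<circ> g)"
  unfolding isom_def by (auto simp: linear_compose image_subset_iff)

lemma refl_conj: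
  assumes "isom b" and b: "\<And>x. b (b x) = x"
  shows "b (refl e (b x)) = refl (b e) x"
proof -
  have "linear b" and lf_b: "\<And>x y. lf (b x) (b y) = lf x y"
    using assms(1) unfolding isom_def by auto
  have "lf (b x) e = lf x (b e)" using lf_b[of x "b e"] b by simp
  with \<open>linear b\<close> b show ?thesis unfolding refl_def by (simp add: linear_diff linear_scale)
qed

text \<open>For null \<open>u\<close> and \<open>lf u t \<noteq> 0\<close>, \<open>plane_refl u t x = 2 P x - x\<close> where \<open>P\<close> is the orthogonal
  projection onto the (nondegenerate) plane spanned by \<open>u\<close> and \<open>t\<close>.\<close>

definition plane_refl :: "real^5 \<Rightarrow> real^5 \<Rightarrow> real^5 \<Rightarrow> real^5" where
  "plane_refl u t x = - x + (2 * (lf x t / lf u t - lf t t * lf x u / (lf u t)\<^sup>2)) *\<^sub>R u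
     + (2 * lf x u / lf u t) *\<^sub>R t"

lemma linear_plane_refl: "linear (plane_refl u t)"
  by (rule linearI) (simp_all add: plane_refl_def algebra_simps add_divide_distrib diff_divide_distrib)

lemma plane_refl_orthogonal: "lf w u = 0 \<Longrightarrow> lf w t = 0 \<Longrightarrow> plane_refl u t w = - w"
  by (simp add: plane_refl_def)

lemma plane_refl_orthogonal_null:
  "lf e u = 0 \<Longrightarrow> plane_refl u t e = - e + (2 * lf e t / lf u t) *\<^sub>R u"
  by (simp add: plane_refl_def)

context
  fixes u t :: "real^5"
  assumes uu: "lf u u = 0" and ut: "lf u t \<noteq> 0"
begin

lemma plane_refl_fixes_null: "plane_refl u t u = u"
  by (rule lf_eqI) (use uu ut in \<open>simp add: plane_refl_def lf_commute[of t u]\<close>)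

lemma plane_refl_fixes_other: "plane_refl u t t = t"
  by (rule lf_eqI)
    (use uu ut in \<open>simp add: plane_refl_def lf_commute[of t u] field_simps power2_eq_square\<close>)

lemma lf_plane_refl_plane_refl: "lf (plane_refl u t x) (plane_refl u t y) = lf x y"
proof -
  have expand: "lf (-x + a *\<^sub>R u + b *\<^sub>R t) (-y + c *\<^sub>R u + d *\<^sub>R t) =
     lf x y - c * lf x u - d * lf x t - a * lf u y + a * c * lf u u + a * d * lf u t
       - b * lf t y + b * c * lf t u + b * d * lf t t" for a b c d
    by (simp add: algebra_simps)
  have coeffs: "X - (2*(Yt/k - \<tau>*Yu/k\<^sup>2))*Xu - (2*Yu/k)*Xt - (2*(Xt/k - \<tau>*Xu/k\<^sup>2))*Yu
      + (2*(Xt/k - \<tau>*Xu/k\<^sup>2))*(2*Yu/k)*k - (2*Xu/k)*Yt + (2*Xu/k)*(2*(Yt/k - \<tau>*Yu/k\<^sup>2))*k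
      + (2*Xu/k)*(2*Yu/k)*\<tau> = X" if "k \<noteq> 0" for X Xt Xu Yt Yu k \<tau> :: real
    using that unfolding power2_eq_square by (simp add: field_simps)
  show ?thesis
    unfolding plane_refl_def expand
    using coeffs[OF ut, where X="lf x y" and Xt="lf x t" and Xu="lf x u" and Yt="lf y t"
      and Yu="lf y u" and \<tau>="lf t t"] uu
    by (simp add: lf_commute[of t u] lf_commute[of u y] lf_commute[of t y])
qed

lemma plane_refl_plane_refl: "plane_refl u t (plane_refl u t x) = x"
proof -
  have lf_u: "lf (plane_refl u t x) u = lf x u" and lf_t: "lf (plane_refl u t x) t = lf x t"
    using lf_plane_refl_plane_refl[of x u] lf_plane_refl_plane_refl[of x t]
    by (simp_all add: plane_refl_fixes_null plane_refl_fixes_other)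
  show ?thesis
    unfolding plane_refl_def[of u t "plane_refl u t x"] lf_u lf_t by (simp add: plane_refl_def)
qed

end

lemma plane_refl_in_H4:
  assumes u: "null_fut u" and ut: "lf u t \<noteq> 0" and x: "x \<in> H4"
  shows "plane_refl u t x \<in> H4"
proof -
  have uu: "lf u u = 0" using u unfolding null_fut_def by simp
  have xx: "lf (plane_refl u t x) (plane_refl u t x) = -1"
    using lf_plane_refl_plane_refl[OF uu ut] x unfolding H4_def by simp
  have "lf (plane_refl u t x) u = lf x u"
    using lf_plane_refl_plane_refl[OF uu ut, of x u] plane_refl_fixes_null[OF uu ut] by simp
  then have "lf (plane_refl u t x) u < 0" using lf_H4_null_fut_neg[OF x u] by simp
  with xx u have "(plane_refl u t x)$0 > 0" using lf_timelike_null_fut(1) by force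
  with xx show ?thesis unfolding H4_def by simp
qed

lemma isom_plane_refl:
  assumes u: "null_fut u" and ut: "lf u t \<noteq> 0"
  shows "isom (plane_refl u t)"
proof -
  have "lf u u = 0" using u unfolding null_fut_def by simp
  then show ?thesis
    unfolding isom_def using linear_plane_refl lf_plane_refl_plane_refl ut
      plane_refl_in_H4[OF u ut] by blast
qed

lemma involution_plane_refl:
  assumes u: "null_fut u" and ut: "lf u t \<noteq> 0"
    and s: "lf s u = 0" "lf s t = 0" "s \<noteq> 0"
  shows "involution (plane_refl u t)"
proof -
  have "lf u u = 0" using u unfolding null_fut_def by simp
  moreover have "plane_refl u t \<noteq> id"
    using plane_refl_orthogonal[OF s(1,2)] \<open>s \<noteq> 0\<close> by (auto simp: vec_eq_iff)
  ultimately show ?thesis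
    unfolding involution_def using isom_plane_refl[OF u ut] plane_refl_plane_refl ut
    by (auto simp: fun_eq_iff)
qed

lemma hplanes_meet_if_lf_sq_less_one:
  assumes e3: "lf e3 e3 = 1" and e4: "lf e4 e4 = 1" and u: "null_fut u"
    and e3u: "lf e3 u = 0" and e4u: "lf e4 u = 0" and g: "(lf e3 e4)\<^sup>2 < 1"
  shows "hplane e3 \<inter> hplane e4 \<noteq> {}"
proof -
  define g where "g = lf e3 e4"
  have [simp]: "lf e4 e3 = g" unfolding g_def by (rule lf_commute)
  have nz: "1 - g * g \<noteq> 0" using g unfolding g_def power2_eq_square by simp
  define z :: "real^5" where "z = axis 0 1"
  define a where "a = (lf z e3 - g * lf z e4) / (1 - g * g)"
  define b where "b = (lf z e4 - g * lf z e3) / (1 - g * g)"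
  \<comment> \<open>\<open>z'\<close> is the projection of the time axis onto the orthogonal complement of \<open>e3, e4\<close>\<close>
  define z' where "z' = z - a *\<^sub>R e3 - b *\<^sub>R e4"
  have "a * (1 - g * g) = lf z e3 - g * lf z e4" and "b * (1 - g * g) = lf z e4 - g * lf z e3"
    using nz unfolding a_def b_def by simp_all
  then have "(a + b * g - lf z e3) * (1 - g * g) = 0" and "(a * g + b - lf z e4) * (1 - g * g) = 0"
    by algebra+
  with nz have "a + b * g = lf z e3" and "a * g + b = lf z e4" by simp_all
  then have z'e3: "lf z' e3 = 0" and z'e4: "lf z' e4 = 0"
    unfolding z'_def by (simp_all add: e3 e4 g_def[symmetric] algebra_simps)
  have uu: "lf u u = 0" and "0 < u$0" using u unfolding null_fut_def by auto
  moreover have "lf z u = - u$0"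
    unfolding z_def by (subst lf_commute) (simp add: lf_axis)
  ultimately have z'u: "lf z' u < 0"
    unfolding z'_def using e3u e4u by simp
  \<comment> \<open>adding a multiple of \<open>u\<close> keeps \<open>z'\<close> orthogonal to both normals and, as \<open>lf z' u \<noteq> 0\<close>,
    can make it a unit timelike vector\<close>
  define x where "x = z' + ((-1 - lf z' z') / (2 * lf z' u)) *\<^sub>R u"
  have xx: "lf x x = -1" and xu: "lf x u < 0"
    unfolding x_def using z'u uu by (simp_all add: lf_commute[of u z'] field_simps)
  have "0 < x$0" using lf_timelike_null_fut(1)[of x u] xx xu u by simp
  moreover have "lf x e3 = 0" "lf x e4 = 0"
    unfolding x_def using z'e3 z'e4 e3u e4u by (simp_all add: lf_commute[of u])
  ultimately have "x \<in> hplane e3 \<inter> hplane e4"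
    unfolding hplane_def H4_def using xx by simp
  then show ?thesis by blast
qed

lemma tangent_normals_decompose:
  assumes e3: "lf e3 e3 = 1" and e4: "lf e4 e4 = 1" and u: "null_fut u"
    and e3u: "lf e3 u = 0" and e4u: "lf e4 u = 0" and disj: "hplane e3 \<inter> hplane e4 = {}"
  shows "\<exists>g c. g * g = 1 \<and> e4 = g *\<^sub>R e3 + c *\<^sub>R u"
proof -
  define g where "g = lf e3 e4"
  have [simp]: "lf e4 e3 = g" unfolding g_def by (rule lf_commute)
  have "\<not> 1 < g * g"
  proof
    assume "1 < g * g"
    then have "lf (e3 - g *\<^sub>R e4) (e3 - g *\<^sub>R e4) < 0" by (simp add: e3 e4 g_def)
    moreover have "lf (e3 - g *\<^sub>R e4) u = 0" using e3u e4u by simp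
    ultimately show False using lf_timelike_null_fut(2) u by blast
  qed
  moreover have "\<not> g * g < 1"
    using hplanes_meet_if_lf_sq_less_one[OF assms(1-5)] disj unfolding g_def power2_eq_square by blast
  ultimately have gg: "g * g = 1" by simp
  have "lf (e4 - g *\<^sub>R e3) (e4 - g *\<^sub>R e3) = 0"
    using gg by (simp add: e3 e4 g_def[symmetric] algebra_simps)
  moreover have "lf (e4 - g *\<^sub>R e3) u = 0" using e3u e4u by simp
  ultimately obtain c where "e4 - g *\<^sub>R e3 = c *\<^sub>R u"
    using collinear_if_null_orthogonal_null_fut u by blast
  then have "e4 = g *\<^sub>R e3 + c *\<^sub>R u" by (metis diff_add_cancel add.commute)
  with gg show ?thesis by blast
qed

text \<open>The normals on the left are the images of \<open>e\<close> and \<open>g e + c u\<close> under \<open>plane_refl u t\<close>,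
  with \<open>a = 2 lf e t / lf u t\<close>.\<close>

lemma refl_comp_tangent_reverse:
  assumes e: "lf e e = 1" and u: "lf u u = 0" and eu: "lf e u = 0" and g: "g * g = 1"
    and b: "b = g * a + 2 * c"
  shows "refl (- e + a *\<^sub>R u) (refl (- (g *\<^sub>R e + c *\<^sub>R u) + b *\<^sub>R u) x)
    = refl (g *\<^sub>R e + c *\<^sub>R u) (refl e x)"
proof (rule lf_eqI)
  fix y
  have [simp]: "lf u e = 0" using eu by (simp add: lf_commute)
  have [simp]: "lf y e = lf e y" "lf y u = lf u y" by (simp_all add: lf_commute)
  show "lf (refl (- e + a *\<^sub>R u) (refl (- (g *\<^sub>R e + c *\<^sub>R u) + b *\<^sub>R u) x)) y =
    lf (refl (g *\<^sub>R e + c *\<^sub>R u) (refl e x)) y"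
    unfolding refl_def b using g by (simp add: e u eu) algebra
qed

lemma plane_refl_reverses_tangent_comp:
  assumes e3: "lf e3 e3 = 1" and e4: "lf e4 e4 = 1" and u: "null_fut u"
    and e3u: "lf e3 u = 0" and e4u: "lf e4 u = 0" and disj: "hplane e3 \<inter> hplane e4 = {}"
    and ut: "lf u t \<noteq> 0"
  shows "plane_refl u t (refl e3 (refl e4 (plane_refl u t x))) = refl e4 (refl e3 x)"
proof -
  obtain g c where gg: "g * g = 1" and e4_eq: "e4 = g *\<^sub>R e3 + c *\<^sub>R u"
    using tangent_normals_decompose[OF assms(1-6)] by blast
  define \<beta> where "\<beta> = plane_refl u t"
  have uu: "lf u u = 0" using u unfolding null_fut_def by simp
  have \<beta>_e3: "\<beta> e3 = - e3 + (2 * lf e3 t / lf u t) *\<^sub>R u"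
    unfolding \<beta>_def using plane_refl_orthogonal_null[OF e3u] .
  have \<beta>_e4: "\<beta> e4 = - (g *\<^sub>R e3 + c *\<^sub>R u) + (2 * lf e4 t / lf u t) *\<^sub>R u"
    unfolding \<beta>_def using plane_refl_orthogonal_null[OF e4u] e4_eq by simp
  have coeff: "2 * lf e4 t / lf u t = g * (2 * lf e3 t / lf u t) + 2 * c"
    unfolding e4_eq using ut by (simp add: field_simps lf_commute[of t u])
  have "\<beta> (refl e3 (refl e4 (\<beta> x))) = \<beta> (refl e3 (\<beta> (\<beta> (refl e4 (\<beta> x)))))"
    unfolding \<beta>_def by (simp add: plane_refl_plane_refl[OF uu ut])
  also have "\<dots> = refl (\<beta> e3) (refl (\<beta> e4) x)"
    unfolding \<beta>_def
    by (simp add: refl_conj[OF isom_plane_refl[OF u ut] plane_refl_plane_refl[OF uu ut]])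
  also have "\<dots> = refl e4 (refl e3 x)"
    unfolding \<beta>_e3 \<beta>_e4 e4_eq[symmetric]
    by (rule refl_comp_tangent_reverse[OF e3 uu e3u gg coeff, folded e4_eq])
  finally show ?thesis unfolding \<beta>_def .
qed

lemma involution_plane_refl_comp_tangent:
  assumes e3: "lf e3 e3 = 1" and e4: "lf e4 e4 = 1" and u: "null_fut u"
    and e3u: "lf e3 u = 0" and e4u: "lf e4 u = 0" and disj: "hplane e3 \<inter> hplane e4 = {}"
    and ut: "lf u t \<noteq> 0"
  shows "involution (plane_refl u t \<circ> (refl e3 \<circ> refl e4))"
proof -
  have uu: "lf u u = 0" using u unfolding null_fut_def by simp
  have square: "(plane_refl u t \<circ> (refl e3 \<circ> refl e4)) ((plane_refl u t \<circ> (refl e3 \<circ> refl e4)) x) = x"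
    for x using plane_refl_reverses_tangent_comp[OF assms] refl_refl[OF e3] refl_refl[OF e4] by simp
  have "plane_refl u t \<circ> (refl e3 \<circ> refl e4) \<noteq> id"
  proof
    assume "plane_refl u t \<circ> (refl e3 \<circ> refl e4) = id"
    then have "refl e3 (refl e4 e3) = plane_refl u t e3"
      using plane_refl_plane_refl[OF uu ut] by (metis comp_apply id_apply)
    then have "lf (refl e3 (refl e4 e3)) e3 = -1"
      using e3 e3u by (simp add: plane_refl_orthogonal_null lf_commute[of u e3])
    moreover obtain g c where "g * g = 1" and "e4 = g *\<^sub>R e3 + c *\<^sub>R u"
      using tangent_normals_decompose[OF assms(1-6)] by blast
    then have "lf (refl e3 (refl e4 e3)) e3 = 1"
      using e3 e3u by (simp add: refl_def lf_commute[of u e3] algebra_simps)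
    ultimately show False by simp
  qed
  moreover have "isom (plane_refl u t \<circ> (refl e3 \<circ> refl e4))"
    using isom_plane_refl[OF u ut] isom_refl[OF e3] isom_refl[OF e4] by (blast intro: isom_comp)
  ultimately show ?thesis unfolding involution_def using square by (simp add: fun_eq_iff)
qed

lemma fixes_bd_refl_comp_if_isotropic:
  assumes e1: "lf e1 e1 = 1" and e2: "lf e2 e2 = 1" and u: "null_fut u"
    and iso: "lf (lf e2 u *\<^sub>R e1 - lf e1 u *\<^sub>R e2) (lf e2 u *\<^sub>R e1 - lf e1 u *\<^sub>R e2) = 0"
  shows "fixes_bd (refl e1 \<circ> refl e2) u"
proof -
  define p1 where "p1 = lf e1 u"
  define p2 where "p2 = lf e2 u"
  define g where "g = lf e1 e2"
  have [simp]: "lf e2 e1 = g" "lf u e1 = p1" "lf u e2 = p2"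
    by (simp_all add: g_def p1_def p2_def lf_commute)
  have "\<exists>l>0. refl e1 (refl e2 u) = l *\<^sub>R u"
  proof (cases "p1 = 0 \<and> p2 = 0")
    case True
    then show ?thesis by (intro exI[of _ 1]) (simp add: refl_def p1_def p2_def)
  next
    case nonzero: False
    have "lf (p2 *\<^sub>R e1 - p1 *\<^sub>R e2) u = 0" by (simp add: p1_def p2_def)
    with iso obtain c where c: "p2 *\<^sub>R e1 - p1 *\<^sub>R e2 = c *\<^sub>R u"
      using collinear_if_null_orthogonal_null_fut[OF _ u] unfolding p1_def p2_def by blast
    have rel: "p2 * lf e1 z - p1 * lf e2 z = c * lf u z" for z
      using arg_cong[OF c, of "\<lambda>v. lf v z"] by simp
    have r1: "p2 - p1 * g = c * p1" and r2: "p2 * g - p1 = c * p2"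
      using rel[of e1] rel[of e2] by (simp_all add: e1 e2 g_def)
    have "refl e1 (refl e2 u) = (1 + 2 * c\<^sup>2 + 2 * c * g) *\<^sub>R u"
    proof (rule lf_eqI)
      fix y
      show "lf (refl e1 (refl e2 u)) y = lf ((1 + 2 * c\<^sup>2 + 2 * c * g) *\<^sub>R u) y"
        unfolding refl_def using r1 r2 rel[of y] by (simp add: power2_eq_square) algebra
    qed
    moreover have "0 < 1 + 2 * c\<^sup>2 + 2 * c * g"
    proof -
      have "p1 * (g * g - 1 - c * c) = 0" and "p2 * (g * g - 1 - c * c) = 0"
        using r1 r2 by algebra+
      with nonzero have "c * c = g * g - 1" by auto
      then have square: "1 + 2 * c\<^sup>2 + 2 * c * g = (g + c)\<^sup>2"
        by (simp add: power2_eq_square algebra_simps)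
      have "g + c \<noteq> 0"
      proof
        assume "g + c = 0"
        moreover have "p2 = p1 * (g + c)" using r1 by (simp add: algebra_simps)
        ultimately have "p2 = 0" by simp
        with r2 nonzero show False by simp
      qed
      with square show ?thesis by simp
    qed
    ultimately show ?thesis by blast
  qed
  with u show ?thesis unfolding fixes_bd_def same_ray_def by auto
qed

lemma refl_comp_pencil_reverse:
  assumes e1: "lf e1 e1 = 1" and e2: "lf e2 e2 = 1" and ss: "lf s s \<noteq> 0"
    and s: "s = a *\<^sub>R e1 + b *\<^sub>R e2"
  shows "refl (e1 - (2 * lf s e1 / lf s s) *\<^sub>R s) (refl (e2 - (2 * lf s e2 / lf s s) *\<^sub>R s) x)
    = refl e2 (refl e1 x)"
proof (rule lf_eqI)
  fix y
  define g where "g = lf e1 e2"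
  define w where "w = 1 / lf s s"
  have ls: "lf s z = a * lf e1 z + b * lf e2 z" "lf z s = a * lf z e1 + b * lf z e2" for z
    unfolding s by simp_all
  have [simp]: "lf e2 e1 = g" "lf y e1 = lf e1 y" "lf y e2 = lf e2 y"
    by (simp_all add: g_def lf_commute)
  have "w * lf s s = 1" unfolding w_def using ss by simp
  then have w: "w * (a * (a + b * g) + b * (a * g + b)) = 1"
    unfolding ls by (simp add: e1 e2 g_def)
  have "2 * lf s e1 / lf s s = 2 * lf s e1 * w" "2 * lf s e2 / lf s s = 2 * lf s e2 * w"
    unfolding w_def by simp_all
  then show "lf (refl (e1 - (2 * lf s e1 / lf s s) *\<^sub>R s) (refl (e2 - (2 * lf s e2 / lf s s) *\<^sub>R s) x)) y
      = lf (refl e2 (refl e1 x)) y"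
    unfolding refl_def using w by (simp add: ls e1 e2 g_def[symmetric]) algebra
qed

lemma plane_refl_on_orthogonal_plane:
  assumes uu: "lf u u = 0" and ut: "lf u t \<noteq> 0"
    and su: "lf s u = 0" and st: "lf s t = 0" and ss: "lf s s \<noteq> 0"
    and e: "e = a *\<^sub>R s + b *\<^sub>R t"
  shows "plane_refl u t e = e - (2 * lf s e / lf s s) *\<^sub>R s"
proof -
  have "plane_refl u t e = - a *\<^sub>R s + b *\<^sub>R t"
    unfolding e using linear_plane_refl plane_refl_orthogonal[OF su st]
      plane_refl_fixes_other[OF uu ut] by (simp add: linear_add linear_scale)
  also have "\<dots> = e - (2 * a) *\<^sub>R s"
    unfolding e by (simp add: scaleR_diff_left[symmetric])
  also have "2 * a = 2 * lf s e / lf s s"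
    unfolding e using st ss by simp
  finally show ?thesis .
qed

lemma lf_pencil_frame:
  assumes s: "s = lf e2 u *\<^sub>R e1 - lf e1 u *\<^sub>R e2" and t: "t = lf s e2 *\<^sub>R e1 - lf s e1 *\<^sub>R e2"
  shows "lf s u = 0" and "lf s t = 0" and "lf u t = - lf s s"
  unfolding t unfolding s by (simp_all add: lf_commute algebra_simps)

lemma plane_refl_reverses_refl_comp:
  assumes e1: "lf e1 e1 = 1" and e2: "lf e2 e2 = 1" and u: "null_fut u"
    and s: "s = lf e2 u *\<^sub>R e1 - lf e1 u *\<^sub>R e2" and t: "t = lf s e2 *\<^sub>R e1 - lf s e1 *\<^sub>R e2"
    and ss: "lf s s \<noteq> 0"
  shows "plane_refl u t (refl e1 (refl e2 (plane_refl u t x))) = refl e2 (refl e1 x)"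
proof -
  define \<beta> where "\<beta> = plane_refl u t"
  have uu: "lf u u = 0" using u unfolding null_fut_def by simp
  note su = lf_pencil_frame(1)[OF s t] and st = lf_pencil_frame(2)[OF s t]
  have ut: "lf u t \<noteq> 0" using lf_pencil_frame(3)[OF s t] ss by simp
  have \<beta>_normal: "\<beta> e = e - (2 * lf s e / lf s s) *\<^sub>R s" if "e = e1 \<or> e = e2" for e
  proof -
    have "e = (lf s e / lf s s) *\<^sub>R s + (- lf e u / lf s s) *\<^sub>R t"
    proof (rule lf_eqI)
      fix y
      have "lf s s * lf e y = lf s e * lf s y - lf e u * lf t y"
        using that unfolding t unfolding s by (auto simp: lf_commute algebra_simps)
      with ss show "lf e y = lf ((lf s e / lf s s) *\<^sub>R s + (- lf e u / lf s s) *\<^sub>R t) y"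
        by (simp add: field_simps)
    qed
    then show ?thesis
      unfolding \<beta>_def by (rule plane_refl_on_orthogonal_plane[OF uu ut su st ss])
  qed
  have "\<beta> (refl e1 (refl e2 (\<beta> x))) = \<beta> (refl e1 (\<beta> (\<beta> (refl e2 (\<beta> x)))))"
    unfolding \<beta>_def by (simp add: plane_refl_plane_refl[OF uu ut])
  also have "\<dots> = refl (\<beta> e1) (refl (\<beta> e2) x)"
    unfolding \<beta>_def
    by (simp add: refl_conj[OF isom_plane_refl[OF u ut] plane_refl_plane_refl[OF uu ut]])
  also have "\<dots> = refl e2 (refl e1 x)"
    unfolding \<beta>_normal[of e1, simplified] \<beta>_normal[of e2, simplified]
    by (rule refl_comp_pencil_reverse[OF e1 e2 ss, where a="lf e2 u" and b="- lf e1 u"])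
      (simp add: s)
  finally show ?thesis unfolding \<beta>_def .
qed

lemma involution_refl_comp_plane_refl:
  assumes e1: "lf e1 e1 = 1" and e2: "lf e2 e2 = 1" and u: "null_fut u"
    and not_fixed: "\<not> fixes_bd (refl e1 \<circ> refl e2) u"
  shows "\<exists>t. lf u t \<noteq> 0 \<and> involution (plane_refl u t)
    \<and> involution (refl e1 \<circ> refl e2 \<circ> plane_refl u t)"
proof -
  define s where "s = lf e2 u *\<^sub>R e1 - lf e1 u *\<^sub>R e2"
  define t where "t = lf s e2 *\<^sub>R e1 - lf s e1 *\<^sub>R e2"
  have uu: "lf u u = 0" using u unfolding null_fut_def by simp
  have ss: "lf s s \<noteq> 0"
    using fixes_bd_refl_comp_if_isotropic[OF e1 e2 u] not_fixed unfolding s_def by blast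
  note frame = lf_pencil_frame[OF s_def t_def]
  have ut: "lf u t \<noteq> 0" using frame(3) ss by simp
  have square: "(refl e1 \<circ> refl e2 \<circ> plane_refl u t) ((refl e1 \<circ> refl e2 \<circ> plane_refl u t) x) = x"
    for x using plane_refl_reverses_refl_comp[OF e1 e2 u s_def t_def ss] refl_refl[OF e1] refl_refl[OF e2]
    by simp
  have "refl e1 \<circ> refl e2 \<circ> plane_refl u t \<noteq> id"
  proof
    assume "refl e1 \<circ> refl e2 \<circ> plane_refl u t = id"
    then have "refl e1 (refl e2 u) = u"
      using plane_refl_fixes_null[OF uu ut] by (metis comp_apply id_apply)
    with u have "fixes_bd (refl e1 \<circ> refl e2) u"
      unfolding fixes_bd_def same_ray_def by (auto intro!: exI[of _ 1])
    with not_fixed show False by contradiction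
  qed
  moreover have "isom (refl e1 \<circ> refl e2 \<circ> plane_refl u t)"
    using isom_plane_refl[OF u ut] isom_refl[OF e1] isom_refl[OF e2] by (blast intro: isom_comp)
  moreover have "s \<noteq> 0" using ss by auto
  ultimately show ?thesis
    using ut involution_plane_refl[OF u ut frame(1,2)] square
    unfolding involution_def by (auto simp: fun_eq_iff)
qed

theorem theorem7p3:
  fixes A B :: "real^5 \<Rightarrow> real^5"
  assumes "pure_hyperbolic A" and "pure_parabolic B" and "fix_disjoint A B"
  shows "linked A B"
proof -
  obtain e1 e2 where e1: "lf e1 e1 = 1" and e2: "lf e2 e2 = 1" and A: "A = refl e1 \<circ> refl e2"
    using assms(1) unfolding pure_hyperbolic_def spacelike_unit_def by blast
  obtain e3 e4 u where e3: "lf e3 e3 = 1" and e4: "lf e4 e4 = 1" and B: "B = refl e3 \<circ> refl e4"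
    and disj: "hplane e3 \<inter> hplane e4 = {}" and u: "null_fut u"
    and ue3: "lf u e3 = 0" and ue4: "lf u e4 = 0"
    using assms(2) unfolding pure_parabolic_def spacelike_unit_def tangent_at_infinity_def
      hplane_bd_def by auto
  then have e3u: "lf e3 u = 0" and e4u: "lf e4 u = 0" by (simp_all add: lf_commute)
  have "fixes_bd B u"
    unfolding B fixes_bd_def same_ray_def using u ue3 ue4
    by (auto simp: refl_fixes_orthogonal intro!: exI[of _ 1])
  with assms(3) have "\<not> fixes_bd A u" unfolding fix_disjoint_def by blast
  then obtain t where ut: "lf u t \<noteq> 0" and \<beta>: "involution (plane_refl u t)"
    and \<alpha>: "involution (A \<circ> plane_refl u t)"
    using involution_refl_comp_plane_refl[OF e1 e2 u] unfolding A by blast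
  have \<gamma>: "involution (plane_refl u t \<circ> B)"
    unfolding B by (rule involution_plane_refl_comp_tangent[OF e3 e4 u e3u e4u disj ut])
  from \<beta> have "plane_refl u t (plane_refl u t x) = x" for x
    unfolding involution_def by (metis comp_apply id_apply)
  then have "A = (A \<circ> plane_refl u t) \<circ> plane_refl u t" and "B = plane_refl u t \<circ> (plane_refl u t \<circ> B)"
    by (simp_all add: fun_eq_iff)
  with \<alpha> \<beta> \<gamma> show ?thesis unfolding linked_def by blast
qed

end
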